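(* Let $r\in\mathbb{N}$ and $\lambda\in(-1,1)$. Then there exists $f\in C^r[-1,1]$ with $f\equiv0$ on $[-1,\lambda]$ such that there is no $g\in C^{r+1}[-1,1]$ satisfying $g^{(i)}(\lambda)=f^{(i)}(\lambda)$ for $0\le i\le\hat r$, together with $g\le f$ on $(\lambda-\varepsilon,\lambda]$ and $g\ge f$ on $[\lambda,\lambda+\varepsilon)$ for some $\varepsilon>0$, where $\hat r:=2\lceil r/2\rceil-1$ (i.e. $\hat r=r$ if $r$ is odd and $\hat r=r-1$ if $r$ is even). *)

theory Defs
  imports "HOL-Analysis.Analysis"
begin

definition deriv_family :: "nat \<Rightarrow> real set \<Rightarrow> (real \<Rightarrow> real) \<Rightarrow> (nat \<Rightarrow> real \<Rightarrow> real) \<Rightarrow> bool" where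
  "deriv_family k S f D \<longleftrightarrow>
     (\<forall>x\<in>S. D 0 x = f x) \<and>
     (\<forall>i<k. \<forall>x\<in>S. (D i has_real_derivative D (Suc i) x) (at x within S)) \<and>
     (\<forall>i\<le>k. continuous_on S (D i))"

definition Ck_on :: "nat \<Rightarrow> real set \<Rightarrow> (real \<Rightarrow> real) \<Rightarrow> bool" where
  "Ck_on k S f \<longleftrightarrow> (\<exists>D. deriv_family k S f D)"

definition rhat :: "nat \<Rightarrow> int" where
  "rhat r = 2 * \<lceil>real r / 2\<rceil> - 1"

end

theory Submission
  imports Defs
begin

text \<open>The witness is the truncated power \<open>f(x) = (x - \<lambda>)\<^sub>+^(r + 1/2)\<close>: it is \<open>C^r\<close> and all
  its derivatives vanish at \<open>\<lambda>\<close>. If \<open>g \<in> C^(r+1)\<close> agrees with \<open>f\<close> to order \<open>rhat r\<close>, Taylor's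
  theorem gives \<open>g(\<lambda> + h) = c h^r + O(|h|^(r+1))\<close> with \<open>c = g\<^sup>(\<^sup>r\<^sup>)(\<lambda>)/r!\<close>. For odd \<open>r\<close>,
  \<open>rhat r = r\<close> and so \<open>c = 0\<close>; for even \<open>r\<close>, \<open>h^r > 0\<close> on both sides of \<open>0\<close>, so \<open>g \<le> 0\<close> to the
  left of \<open>\<lambda>\<close> forces \<open>c \<le> 0\<close>. Either way \<open>g(\<lambda> + h) \<le> O(h^(r+1))\<close> for \<open>h > 0\<close>, so \<open>g\<close> cannot
  stay above \<open>f(\<lambda> + h) = h^(r + 1/2)\<close>.\<close>

definition truncated_powr :: "real \<Rightarrow> real \<Rightarrow> real \<Rightarrow> real" where
  "truncated_powr l a x = max 0 (x - l) powr a"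

lemma truncated_powr_left [simp]: "x \<le> l \<Longrightarrow> truncated_powr l a x = 0"
  by (simp add: truncated_powr_def)

lemma truncated_powr_right: "l \<le> x \<Longrightarrow> truncated_powr l a x = (x - l) powr a"
  by (simp add: truncated_powr_def)

lemma continuous_on_truncated_powr: "0 < a \<Longrightarrow> continuous_on S (truncated_powr l a)"
  unfolding truncated_powr_def by (intro continuous_on_powr' continuous_intros) auto

lemma has_real_derivative_truncated_powr:
  assumes "1 < a"
  shows "(truncated_powr l a has_real_derivative a * truncated_powr l (a - 1) x) (at x)"
proof -
  consider "l < x" | "x < l" | "x = l" by linarith
  then show ?thesis
  proof cases
    case 1
    have "((\<lambda>y. (y - l) powr a) has_real_derivative a * truncated_powr l (a - 1) x) (at x)"
      using 1 by (auto intro!: derivative_eq_intros simp: truncated_powr_right)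
    then show ?thesis
      by (rule has_field_derivative_transform_within_open[where S = "{l<..}"])
        (use 1 in \<open>auto simp: truncated_powr_right\<close>)
  next
    case 2
    have "((\<lambda>y. 0) has_real_derivative a * truncated_powr l (a - 1) x) (at x)"
      using 2 by simp
    then show ?thesis
      by (rule has_field_derivative_transform_within_open[where S = "{..<l}"])
        (use 2 in auto)
  next
    case 3
    have quotient: "truncated_powr l a y / (y - l) = truncated_powr l (a - 1) y"
      if "y \<noteq> l" for y
      using that by (cases "l < y") (auto simp: truncated_powr_right powr_diff)
    have "(truncated_powr l (a - 1) \<longlongrightarrow> 0) (at l)"
      using continuous_on_truncated_powr[of "a - 1" UNIV l] assms
      by (metis UNIV_I continuous_on_def order_refl truncated_powr_left diff_gt_0_iff_gt)
    then have "((\<lambda>y. (truncated_powr l a y - truncated_powr l a l) / (y - l)) \<longlongrightarrow> 0) (at l)"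
      by (rule Lim_transform_eventually) (auto simp: eventually_at_filter quotient)
    then show ?thesis
      using 3 by (simp add: has_field_derivative_iff)
  qed
qed

lemma deriv_family_truncated_powr:
  assumes "real k < a"
  shows "deriv_family k S (truncated_powr l a)
           (\<lambda>i x. (\<Prod>j<i. a - real j) * truncated_powr l (a - real i) x)"
  unfolding deriv_family_def
proof (intro conjI ballI allI impI)
  fix i x assume "i < k"
  then have "((\<lambda>x. (\<Prod>j<i. a - real j) * truncated_powr l (a - real i) x) has_real_derivative
      (\<Prod>j<i. a - real j) * ((a - real i) * truncated_powr l (a - real i - 1) x)) (at x)"
    using assms by (intro DERIV_cmult has_real_derivative_truncated_powr) simp
  then show "((\<lambda>x. (\<Prod>j<i. a - real j) * truncated_powr l (a - real i) x) has_real_derivative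
      (\<Prod>j<Suc i. a - real j) * truncated_powr l (a - real (Suc i)) x) (at x within S)"
    by (simp add: has_field_derivative_at_within algebra_simps)
next
  fix i assume "i \<le> k"
  then show "continuous_on S (\<lambda>x. (\<Prod>j<i. a - real j) * truncated_powr l (a - real i) x)"
    using assms by (intro continuous_intros continuous_on_truncated_powr) simp
qed simp

lemma deriv_family_Taylor:
  assumes fam: "deriv_family (Suc n) S g D" and sub: "{a..b} \<subseteq> interior S"
    and c: "c \<in> {a..b}" and x: "x \<in> {a..b}"
  shows "\<exists>\<xi>\<in>{a..b}. g x = (\<Sum>m\<le>n. D m c / fact m * (x - c) ^ m)
                          + D (Suc n) \<xi> / fact (Suc n) * (x - c) ^ Suc n"
proof (cases "x = c")
  case True
  have "c \<in> S"
    using c sub interior_subset by blast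
  with fam True c show ?thesis
    by (auto simp: deriv_family_def intro: bexI[of _ c])
next
  case False
  have "(D m has_real_derivative D (Suc m) t) (at t)" if "m < Suc n" "t \<in> {a..b}" for m t
  proof -
    have "t \<in> interior S"
      using that sub by blast
    with fam that show ?thesis
      unfolding deriv_family_def by (metis at_within_interior interior_subset subsetD)
  qed
  moreover have "g x = D 0 x"
    using fam x sub interior_subset unfolding deriv_family_def by (metis subsetD)
  ultimately obtain t where "if x < c then x < t \<and> t < c else c < t \<and> t < x"
      and "g x = (\<Sum>m<Suc n. D m c / fact m * (x - c) ^ m) + D (Suc n) t / fact (Suc n) * (x - c) ^ Suc n"
    using Taylor[of "Suc n" D "D 0" a b c x] c x False by auto
  then show ?thesis
    using c x by (auto simp: lessThan_Suc_atMost split: if_splits intro!: bexI[of _ t])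
qed

lemma deriv_family_flat_Taylor_bound:
  assumes fam: "deriv_family (Suc n) S g D" and l: "l \<in> interior S"
    and flat: "\<And>i. i < n \<Longrightarrow> D i l = 0"
  obtains K where "\<forall>\<^sub>F h in at 0. \<bar>g (l + h) - D n l / fact n * h ^ n\<bar> \<le> K * \<bar>h\<bar> ^ Suc n"
proof -
  obtain \<delta> where "\<delta> > 0" and "cball l \<delta> \<subseteq> interior S"
    using l open_contains_cball open_interior by blast
  then have I: "{l - \<delta>..l + \<delta>} \<subseteq> interior S"
    by (simp add: cball_eq_atLeastAtMost)
  have "continuous_on {l - \<delta>..l + \<delta>} (D (Suc n))"
    using fam I interior_subset unfolding deriv_family_def by (meson continuous_on_subset order.trans le_refl)
  then have "bounded (D (Suc n) ` {l - \<delta>..l + \<delta>})"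
    by (intro compact_imp_bounded compact_continuous_image) auto
  then obtain M where M: "\<And>\<xi>. \<xi> \<in> {l - \<delta>..l + \<delta>} \<Longrightarrow> \<bar>D (Suc n) \<xi>\<bar> \<le> M"
    unfolding bounded_iff by fastforce
  have bound: "\<bar>g (l + h) - D n l / fact n * h ^ n\<bar> \<le> M / fact (Suc n) * \<bar>h\<bar> ^ Suc n"
    if "\<bar>h\<bar> < \<delta>" for h
  proof -
    have "l \<in> {l - \<delta>..l + \<delta>}" "l + h \<in> {l - \<delta>..l + \<delta>}"
      using that \<open>\<delta> > 0\<close> by auto
    from deriv_family_Taylor[OF fam I this] obtain \<xi> where \<xi>: "\<xi> \<in> {l - \<delta>..l + \<delta>}"
      and "g (l + h) = (\<Sum>m\<le>n. D m l / fact m * h ^ m) + D (Suc n) \<xi> / fact (Suc n) * h ^ Suc n"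
      by (auto simp only: add_diff_cancel_left')
    then have "\<bar>g (l + h) - D n l / fact n * h ^ n\<bar> = \<bar>D (Suc n) \<xi> / fact (Suc n) * h ^ Suc n\<bar>"
      using sum.lessThan_Suc[of "\<lambda>m. D m l / fact m * h ^ m" n] by (simp add: lessThan_Suc_atMost flat)
    also have "\<dots> = \<bar>D (Suc n) \<xi>\<bar> / fact (Suc n) * \<bar>h\<bar> ^ Suc n"
      by (simp add: abs_mult power_abs)
    also have "\<dots> \<le> M / fact (Suc n) * \<bar>h\<bar> ^ Suc n"
      using M[OF \<xi>] by (intro mult_right_mono divide_right_mono) auto
    finally show ?thesis .
  qed
  have "\<forall>\<^sub>F h in at (0::real). \<bar>h\<bar> < \<delta>"
    using \<open>\<delta> > 0\<close> by (auto simp: eventually_at dist_real_def)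
  then show ?thesis
    by (rule that[OF eventually_mono]) (rule bound)
qed

lemma deriv_family_flat_even_order_nonpos:
  assumes fam: "deriv_family (Suc n) S g D" and l: "l \<in> interior S"
    and flat: "\<And>i. i < n \<Longrightarrow> D i l = 0" and "even n"
    and left: "\<forall>\<^sub>F h in at_left 0. g (l + h) \<le> 0"
  shows "D n l \<le> 0"
proof -
  obtain K where "\<forall>\<^sub>F h in at 0. \<bar>g (l + h) - D n l / fact n * h ^ n\<bar> \<le> K * \<bar>h\<bar> ^ Suc n"
    using deriv_family_flat_Taylor_bound[OF fam l flat] by blast
  then have "\<forall>\<^sub>F h in at_left 0. \<bar>g (l + h) - D n l / fact n * h ^ n\<bar> \<le> K * \<bar>h\<bar> ^ Suc n"
    by (simp add: eventually_at_split)
  moreover have "\<forall>\<^sub>F h in at_left (0::real). h < 0"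
    using eventually_at_left_real[of "-1" 0] by (auto elim: eventually_mono)
  ultimately have "\<forall>\<^sub>F h in at_left 0. D n l / fact n \<le> K * \<bar>h\<bar>"
    using left
  proof eventually_elim
    case (elim h)
    then have "D n l / fact n * h ^ n \<le> K * \<bar>h\<bar> ^ Suc n"
      by (simp add: abs_le_iff)
    then have "D n l / fact n * \<bar>h\<bar> ^ n \<le> (K * \<bar>h\<bar>) * \<bar>h\<bar> ^ n"
      by (simp add: power_even_abs[OF \<open>even n\<close>] mult.assoc)
    then show ?case
      by (rule mult_right_le_imp_le) (use \<open>h < 0\<close> in simp)
  qed
  moreover have "((\<lambda>h. K * \<bar>h\<bar>) \<longlongrightarrow> 0) (at_left (0::real))"
    by (intro tendsto_eq_intros) auto
  ultimately have "D n l / fact n \<le> 0"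
    by (intro tendsto_lowerbound) auto
  then show ?thesis
    by (smt (verit) divide_le_0_iff fact_gt_zero)
qed

lemma deriv_family_flat_no_powr_lower_bound:
  fixes a :: real
  assumes fam: "deriv_family (Suc n) S g D" and l: "l \<in> interior S"
    and flat: "\<And>i. i < n \<Longrightarrow> D i l = 0" and "D n l \<le> 0" and "a < real n + 1"
    and right: "\<forall>\<^sub>F h in at_right 0. h powr a \<le> g (l + h)"
  shows False
proof -
  obtain K where "\<forall>\<^sub>F h in at 0. \<bar>g (l + h) - D n l / fact n * h ^ n\<bar> \<le> K * \<bar>h\<bar> ^ Suc n"
    using deriv_family_flat_Taylor_bound[OF fam l flat] by blast
  then have "\<forall>\<^sub>F h in at_right 0. \<bar>g (l + h) - D n l / fact n * h ^ n\<bar> \<le> K * \<bar>h\<bar> ^ Suc n"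
    by (simp add: eventually_at_split)
  moreover have "\<forall>\<^sub>F h in at_right (0::real). 0 < h"
    using eventually_at_right_real[of 0 1] by (auto elim: eventually_mono)
  ultimately have "\<forall>\<^sub>F h in at_right 0. 1 \<le> K * h powr (real n + 1 - a)"
    using right
  proof eventually_elim
    case (elim h)
    have "D n l / fact n * h ^ n \<le> 0"
      using \<open>D n l \<le> 0\<close> \<open>0 < h\<close> by (simp add: divide_nonpos_pos mult_nonpos_nonneg)
    with elim have "h powr a \<le> K * h ^ Suc n"
      by (simp add: abs_le_iff)
    also have "\<dots> = (K * h powr (real n + 1 - a)) * h powr a"
      using \<open>0 < h\<close> by (simp add: powr_realpow[symmetric] powr_diff powr_add)
    finally show ?case
      using \<open>0 < h\<close> by simp
  qed
  moreover have "((\<lambda>h. K * h powr (real n + 1 - a)) \<longlongrightarrow> 0) (at_right (0::real))"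
    using \<open>a < real n + 1\<close> by (auto intro!: tendsto_eq_intros tendsto_zero_powrI eventually_at_rightI[of 0 1])
  ultimately have "(1::real) \<le> 0"
    by (intro tendsto_lowerbound) auto
  then show False
    by simp
qed

lemma deriv_family_flat_no_one_sided_contact:
  fixes a :: real
  assumes fam: "deriv_family (Suc n) S g D" and l: "l \<in> interior S"
    and flat: "\<And>i. i < n \<Longrightarrow> D i l = 0" and odd: "odd n \<Longrightarrow> D n l = 0" and "a < real n + 1"
    and left: "\<forall>\<^sub>F h in at_left 0. g (l + h) \<le> 0"
    and right: "\<forall>\<^sub>F h in at_right 0. h powr a \<le> g (l + h)"
  shows False
proof -
  have "D n l \<le> 0"
  proof (cases "odd n")
    case True
    with odd show ?thesis by simp
  next
    case False
    then have "even n" by simp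
    with fam l flat show ?thesis
      using left by (rule deriv_family_flat_even_order_nonpos)
  qed
  with fam l flat show False
    using \<open>a < real n + 1\<close> right by (rule deriv_family_flat_no_powr_lower_bound)
qed

lemma eventually_at_left_0_shift:
  fixes l e :: real
  assumes "l \<in> interior S" and "0 < e" and "\<forall>x\<in>S. l - e < x \<and> x \<le> l \<longrightarrow> P x"
  shows "\<forall>\<^sub>F h in at_left 0. P (l + h)"
proof -
  obtain d where "0 < d" and d: "ball l d \<subseteq> S"
    using assms(1) by (auto simp: mem_interior)
  have "\<forall>\<^sub>F h in at_left 0. h \<in> {- min e d<..<0}"
    using \<open>0 < d\<close> \<open>0 < e\<close> by (intro eventually_at_left_real) simp
  moreover have "P (l + h)" if "h \<in> {- min e d<..<0}" for h
  proof -
    have "l + h \<in> S"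
      using that d by (auto simp: dist_real_def)
    with that assms(3) show ?thesis by auto
  qed
  ultimately show ?thesis
    by (rule eventually_mono)
qed

lemma eventually_at_right_0_shift:
  fixes l e :: real
  assumes "l \<in> interior S" and "0 < e" and "\<forall>x\<in>S. l \<le> x \<and> x < l + e \<longrightarrow> P x"
  shows "\<forall>\<^sub>F h in at_right 0. P (l + h)"
proof -
  obtain d where "0 < d" and d: "ball l d \<subseteq> S"
    using assms(1) by (auto simp: mem_interior)
  have "\<forall>\<^sub>F h in at_right 0. h \<in> {0<..<min e d}"
    using \<open>0 < d\<close> \<open>0 < e\<close> by (intro eventually_at_right_real) simp
  moreover have "P (l + h)" if "h \<in> {0<..<min e d}" for h
  proof -
    have "l + h \<in> S"
      using that d by (auto simp: dist_real_def)
    with that assms(3) show ?thesis by auto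
  qed
  ultimately show ?thesis
    by (rule eventually_mono)
qed

lemma rhat_eq: "rhat r = (if odd r then int r else int r - 1)"
proof -
  have "\<lceil>real r / 2\<rceil> = (if odd r then int r div 2 + 1 else int r div 2)"
    by (rule ceiling_unique) (auto elim!: evenE oddE)
  then show ?thesis
    unfolding rhat_def by (auto elim!: evenE oddE)
qed

theorem lemma3p2:
  fixes r :: nat and lam :: real
  assumes "-1 < lam" and "lam < 1"
  shows "\<exists>f Df. deriv_family r {-1..1} f Df \<and> (\<forall>x\<in>{-1..lam}. f x = 0) \<and>
     \<not> (\<exists>g Dg. deriv_family (Suc r) {-1..1} g Dg \<and>
           (\<forall>i::nat. int i \<le> rhat r \<longrightarrow> Dg i lam = Df i lam) \<and>
           (\<exists>eps>0. (\<forall>x\<in>{-1..1}. lam - eps < x \<and> x \<le> lam \<longrightarrow> g x \<le> f x) \<and>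
                   (\<forall>x\<in>{-1..1}. lam \<le> x \<and> x < lam + eps \<longrightarrow> g x \<ge> f x)))"
proof -
  define a where "a = real r + 1 / 2"
  define f where "f = truncated_powr lam a"
  define Df where "Df = (\<lambda>i x. (\<Prod>j<i. a - real j) * truncated_powr lam (a - real i) x)"
  have "deriv_family r {-1..1} f Df"
    unfolding f_def Df_def by (rule deriv_family_truncated_powr) (simp add: a_def)
  moreover have "\<forall>x\<in>{-1..lam}. f x = 0"
    by (simp add: f_def)
  moreover have False
    if fam: "deriv_family (Suc r) {-1..1} g Dg"
      and agree: "\<forall>i::nat. int i \<le> rhat r \<longrightarrow> Dg i lam = Df i lam" and "eps > 0"
      and below: "\<forall>x\<in>{-1..1}. lam - eps < x \<and> x \<le> lam \<longrightarrow> g x \<le> f x"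
      and above: "\<forall>x\<in>{-1..1}. lam \<le> x \<and> x < lam + eps \<longrightarrow> g x \<ge> f x"
    for g Dg eps
  proof -
    have lam: "lam \<in> interior {-1..1}"
      using assms by simp
    have "\<forall>x\<in>{-1..1}. lam - eps < x \<and> x \<le> lam \<longrightarrow> g x \<le> 0"
      using below by (simp add: f_def)
    then have left: "\<forall>\<^sub>F h in at_left 0. g (lam + h) \<le> 0"
      by (rule eventually_at_left_0_shift[OF lam \<open>eps > 0\<close>])
    have "\<forall>x\<in>{-1..1}. lam \<le> x \<and> x < lam + eps \<longrightarrow> (x - lam) powr a \<le> g x"
      using above by (simp add: f_def truncated_powr_right)
    from eventually_at_right_0_shift[OF lam \<open>eps > 0\<close> this]
    have right: "\<forall>\<^sub>F h in at_right 0. h powr a \<le> g (lam + h)"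
      by simp
    show False
      by (rule deriv_family_flat_no_one_sided_contact[OF fam lam _ _ _ left right])
        (use agree in \<open>auto simp: rhat_eq Df_def a_def\<close>)
  qed
  ultimately show ?thesis
    by blast
qed

end
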